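(* Consider a resource selection game with finite player set $N$ and finite resource set $R$ in which all resources have the same strictly increasing delay function $d$, and let $\mathcal{P}$ be a partition of $N$. Then every sequence of weak improving moves, each performed by a coalition that is a set of the partition $\mathcal{P}$, is finite, and it ends in a partition equilibrium.
   Context: Resource selection game: every player's strategy set is $R$; a state is $s=(s_i)_{i\in N}$ with $s_i\in R$; $\ell_r(s)$ is the number of players choosing $r$; player $i$'s cost is $c_i(s)=d(\ell_{s_i}(s))$ and utility $u_i(s)=-c_i(s)$, where $d:\{1,\dots,|N|\}\to\mathbb{N}$ is non-negative and strictly increasing. For $C\subseteq N$ write $s=(s_C,s_{-C})$. A weak improving move of coalition $C$ from state $s$ is a choice $s'_C$ with $u_i(s'_C,s_{-C})\ge u_i(s)$ for all $i\in C$ and $u_i(s'_C,s_{-C})>u_i(s)$ for at least one $i\in C$; the resulting state is $(s'_C,s_{-C})$. A partition equilibrium (with respect to $\mathcal{P}$) is a state in which no set $C\in\mathcal{P}$ has a weak improving move. *)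

theory Defs
  imports Main "HOL-Library.FuncSet" "HOL-Library.Disjoint_Sets"
begin

definition states :: "'n set \<Rightarrow> 'r set \<Rightarrow> ('n \<Rightarrow> 'r) set" where
  "states N R = N \<rightarrow>\<^sub>E R"

definition load :: "'n set \<Rightarrow> ('n \<Rightarrow> 'r) \<Rightarrow> 'r \<Rightarrow> nat" where
  "load N s r = card {i \<in> N. s i = r}"

definition cost :: "'n set \<Rightarrow> (nat \<Rightarrow> nat) \<Rightarrow> ('n \<Rightarrow> 'r) \<Rightarrow> 'n \<Rightarrow> nat" where
  "cost N d s i = d (load N s (s i))"

definition utility :: "'n set \<Rightarrow> (nat \<Rightarrow> nat) \<Rightarrow> ('n \<Rightarrow> 'r) \<Rightarrow> 'n \<Rightarrow> int" where
  "utility N d s i = - int (cost N d s i)"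

definition weak_improving_move ::
  "'n set \<Rightarrow> 'r set \<Rightarrow> (nat \<Rightarrow> nat) \<Rightarrow> 'n set \<Rightarrow> ('n \<Rightarrow> 'r) \<Rightarrow> ('n \<Rightarrow> 'r) \<Rightarrow> bool" where
  "weak_improving_move N R d C s s' \<longleftrightarrow>
     s \<in> states N R \<and> s' \<in> states N R \<and> (\<forall>i. i \<notin> C \<longrightarrow> s' i = s i) \<and>
     (\<forall>i\<in>C. utility N d s' i \<ge> utility N d s i) \<and>
     (\<exists>i\<in>C. utility N d s' i > utility N d s i)"

definition partition_move ::
  "'n set \<Rightarrow> 'r set \<Rightarrow> (nat \<Rightarrow> nat) \<Rightarrow> 'n set set \<Rightarrow> ('n \<Rightarrow> 'r) \<Rightarrow> ('n \<Rightarrow> 'r) \<Rightarrow> bool" where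
  "partition_move N R d P s s' \<longleftrightarrow> (\<exists>C\<in>P. weak_improving_move N R d C s s')"

definition partition_equilibrium ::
  "'n set \<Rightarrow> 'r set \<Rightarrow> (nat \<Rightarrow> nat) \<Rightarrow> 'n set set \<Rightarrow> ('n \<Rightarrow> 'r) \<Rightarrow> bool" where
  "partition_equilibrium N R d P s \<longleftrightarrow>
     s \<in> states N R \<and> (\<forall>C\<in>P. \<not> (\<exists>s'. weak_improving_move N R d C s s'))"

end

theory Submission imports Defs begin

text \<open>A potential for partition moves: count ordered pairs of players sharing a resource,
  pairs inside one coalition of \<open>P\<close> with weight 2 and all other pairs with weight 1. Fixing a
  coalition \<open>C\<close>, the pairs involving \<open>C\<close> contribute exactly twice the total load experienced by
  the members of \<open>C\<close>, while the remaining pairs are untouched by a move of \<open>C\<close>. A weak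
  improving move of \<open>C\<close> lowers no member's load and lowers some member's load (since \<open>d\<close> is strictly
  increasing), so the potential strictly decreases; as it is a natural number, no infinite
  sequence of such moves exists.\<close>

lemma load_eq_sum: "finite N \<Longrightarrow> load N s r = (\<Sum>j\<in>N. of_bool (s j = r))"
  by (simp add: load_def sum_of_bool_eq Int_def)

lemma load_pos:
  assumes "finite N" "i \<in> N"
  shows "1 \<le> load N s (s i)"
  using card_mono[of "{j \<in> N. s j = s i}" "{i}"] assms by (auto simp: load_def)

lemma load_le_card: "finite N \<Longrightarrow> load N s r \<le> card N"
  unfolding load_def by (rule card_mono) auto

lemma sum_sum_split_symmetric:
  fixes h :: "'a \<Rightarrow> 'a \<Rightarrow> 'b::comm_semiring_1"
  assumes N: "finite N" and C: "C \<subseteq> N" and sym: "\<And>i j. h i j = h j i"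
  shows "(\<Sum>i\<in>N. \<Sum>j\<in>N. h i j)
    = (\<Sum>i\<in>N-C. \<Sum>j\<in>N-C. h i j) + (\<Sum>i\<in>C. \<Sum>j\<in>C. h i j) + 2 * (\<Sum>i\<in>C. \<Sum>j\<in>N-C. h i j)"
proof -
  have split: "sum g N = sum g (N - C) + sum g C" for g :: "'a \<Rightarrow> 'b"
    using sum.subset_diff[OF C N] .
  have "(\<Sum>i\<in>N-C. \<Sum>j\<in>C. h i j) = (\<Sum>i\<in>C. \<Sum>j\<in>N-C. h i j)"
    by (subst sum.swap) (simp add: sym)
  then show ?thesis
    by (simp add: split sum.distrib mult_2 algebra_simps)
qed

definition pair_weight :: "'n set set \<Rightarrow> 'n \<Rightarrow> 'n \<Rightarrow> nat" where
  "pair_weight P i j = (if \<exists>C\<in>P. i \<in> C \<and> j \<in> C then 2 else 1)"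

definition potential :: "'n set \<Rightarrow> 'n set set \<Rightarrow> ('n \<Rightarrow> 'r) \<Rightarrow> nat" where
  "potential N P s = (\<Sum>i\<in>N. \<Sum>j\<in>N. of_bool (s i = s j) * pair_weight P i j)"

lemma pair_weight_same_block: "C \<in> P \<Longrightarrow> i \<in> C \<Longrightarrow> j \<in> C \<Longrightarrow> pair_weight P i j = 2"
  by (auto simp: pair_weight_def)

lemma pair_weight_other_block:
  assumes "disjoint P" "C \<in> P" "i \<in> C" "j \<notin> C"
  shows "pair_weight P i j = 1"
  using assms disjointD by (fastforce simp: pair_weight_def)

lemma potential_split_coalition:
  assumes N: "finite N" and P: "disjoint P" and C: "C \<in> P" "C \<subseteq> N"
  shows "potential N P s
    = (\<Sum>i\<in>N-C. \<Sum>j\<in>N-C. of_bool (s i = s j) * pair_weight P i j) + 2 * (\<Sum>i\<in>C. load N s (s i))"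
proof -
  let ?eq = "\<lambda>i j. of_bool (s i = s j) :: nat"
  let ?outside = "\<Sum>i\<in>N-C. \<Sum>j\<in>N-C. ?eq i j * pair_weight P i j"
  have "potential N P s = ?outside + (\<Sum>i\<in>C. \<Sum>j\<in>C. ?eq i j * pair_weight P i j)
      + 2 * (\<Sum>i\<in>C. \<Sum>j\<in>N-C. ?eq i j * pair_weight P i j)"
    unfolding potential_def
    by (rule sum_sum_split_symmetric[OF N C(2)]) (auto simp: pair_weight_def)
  also have "\<dots> = ?outside + 2 * (\<Sum>i\<in>C. \<Sum>j\<in>C. ?eq i j) + 2 * (\<Sum>i\<in>C. \<Sum>j\<in>N-C. ?eq i j)"
    using P C by (simp add: pair_weight_same_block pair_weight_other_block sum_distrib_left mult.commute)
  also have "\<dots> = ?outside + 2 * (\<Sum>i\<in>C. load N s (s i))"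
    unfolding load_eq_sum[OF N] sum.subset_diff[OF C(2) N]
    by (simp add: sum.distrib eq_commute algebra_simps)
  finally show ?thesis .
qed

lemma weak_improving_move_load_decrease:
  assumes N: "finite N" and C: "C \<subseteq> N" and d: "strict_mono_on {1..card N} d"
    and move: "weak_improving_move N R d C s s'"
  shows "\<forall>i\<in>C. load N s' (s' i) \<le> load N s (s i)"
    and "\<exists>i\<in>C. load N s' (s' i) < load N s (s i)"
proof -
  have in_range: "load N t (t i) \<in> {1..card N}" if "i \<in> C" for t i
    using that C load_pos[OF N] load_le_card[OF N] by auto
  show "\<forall>i\<in>C. load N s' (s' i) \<le> load N s (s i)"
  proof
    fix i assume "i \<in> C"
    then have "d (load N s' (s' i)) \<le> d (load N s (s i))"
      using move by (auto simp: weak_improving_move_def utility_def cost_def)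
    then show "load N s' (s' i) \<le> load N s (s i)"
      using strict_mono_on_less_eq[OF d in_range in_range] \<open>i \<in> C\<close> by blast
  qed
  obtain i where "i \<in> C" and "d (load N s' (s' i)) < d (load N s (s i))"
    using move by (auto simp: weak_improving_move_def utility_def cost_def)
  then show "\<exists>i\<in>C. load N s' (s' i) < load N s (s i)"
    using strict_mono_on_less[OF d in_range in_range] by blast
qed

lemma weak_improving_move_potential_less:
  assumes N: "finite N" and P: "disjoint P" and C: "C \<in> P" "C \<subseteq> N"
    and d: "strict_mono_on {1..card N} d"
    and move: "weak_improving_move N R d C s s'"
  shows "potential N P s' < potential N P s"
proof -
  have fixed: "s' i = s i" if "i \<notin> C" for i
    using move that by (simp add: weak_improving_move_def)
  have "(\<Sum>i\<in>C. load N s' (s' i)) < (\<Sum>i\<in>C. load N s (s i))"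
    using weak_improving_move_load_decrease[OF N C(2) d move] finite_subset[OF C(2) N]
    by (intro sum_strict_mono_ex1) auto
  then show ?thesis
    using potential_split_coalition[OF N P C, of s] potential_split_coalition[OF N P C, of s']
    by (simp add: fixed)
qed

theorem proposition1:
  fixes N :: "'n set" and R :: "'r set" and d :: "nat \<Rightarrow> nat" and P :: "'n set set"
  assumes "finite N" and "finite R"
    and "strict_mono_on {1..card N} d"
    and "partition_on N P"
  shows "\<not> (\<exists>f :: nat \<Rightarrow> ('n \<Rightarrow> 'r). \<forall>k. partition_move N R d P (f k) (f (Suc k)))
    \<and> (\<forall>s\<in>states N R. \<not> (\<exists>s'. partition_move N R d P s s') \<longrightarrow> partition_equilibrium N R d P s)"
proof
  have descent: "(s', s) \<in> measure (potential N P)" if "partition_move N R d P s s'" for s s'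
    using that weak_improving_move_potential_less[OF assms(1) partition_onD2[OF assms(4)] _ _ assms(3)]
      partition_onD1[OF assms(4)]
    unfolding partition_move_def in_measure by blast
  show "\<not> (\<exists>f :: nat \<Rightarrow> ('n \<Rightarrow> 'r). \<forall>k. partition_move N R d P (f k) (f (Suc k)))"
  proof
    assume "\<exists>f :: nat \<Rightarrow> ('n \<Rightarrow> 'r). \<forall>k. partition_move N R d P (f k) (f (Suc k))"
    then obtain f :: "nat \<Rightarrow> ('n \<Rightarrow> 'r)" where "\<And>k. partition_move N R d P (f k) (f (Suc k))"
      by blast
    then show False
      using wf_no_infinite_down_chainE[OF wf_measure[of "potential N P"], of f] descent by blast
  qed
  show "\<forall>s\<in>states N R. \<not> (\<exists>s'. partition_move N R d P s s') \<longrightarrow> partition_equilibrium N R d P s"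
    by (auto simp: partition_move_def partition_equilibrium_def)
qed

end
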